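(* The category of regular E-systems is isomorphic to the category of crossed bimodules over rings. Explicitly: to a regular E-system $(B,D,d,\theta)$ assign the crossed bimodule $(B,D,d)$ where the additive group $B$ is a $D$-bimodule via $xb=\theta_x b$, $bx=b\theta_x$; conversely to a crossed bimodule $(B,D,d)$ assign the E-system $(B,D,d,\theta)$ where $B$ carries the multiplication $b\ast b'=d(b)b'=b\,d(b')$ and $\theta_x b=xb$, $b\theta_x=bx$; on morphisms both assignments are the identity on pairs $(f_1,f_0)$. These assignments are mutually inverse functors, bijective on objects and on morphisms.
   Context: Bimultiplications: for a ring $A$, a bimultiplication $\sigma$ is a pair of additive maps $a\mapsto\sigma a$, $a\mapsto a\sigma$ with $\sigma(ab)=(\sigma a)b$, $(ab)\sigma=a(b\sigma)$, $a(\sigma b)=(a\sigma)b$; they form the ring $M_A$; $\mu_c$ denotes the inner bimultiplication $\mu_c a=ca$, $a\mu_c=ac$. Two bimultiplications $\sigma,\tau$ are permutable if $\sigma(a\tau)=(\sigma a)\tau$ and $\tau(a\sigma)=(\tau a)\sigma$ for all $a\in A$. An E-system is $(B,D,d,\theta)$ with $B$ a ring, $D$ a ring with unit, $d:B\to D$, $\theta:D\to M_B$ ring homomorphisms, $\theta\circ d=\mu$, and $d(\theta_x b)=x\,d(b)$, $d(b\theta_x)=d(b)x$. It is regular if $\theta(1)=1$ and any two elements of $\theta(D)$ are permutable. A morphism of E-systems $(f_1,f_0):(B,D,d,\theta)\to(B',D',d',\theta')$ is a pair of ring homomorphisms $f_1:B\to B'$, $f_0:D\to D'$ with $f_0d=d'f_1$,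 $f_1(\theta_x b)=\theta'_{f_0(x)}f_1(b)$, $f_1(b\theta_x)=f_1(b)\theta'_{f_0(x)}$. A crossed bimodule over rings is a triple $(B,D,d)$ with $D$ a ring with unit, $B$ a (unital) $D$-bimodule, and $d:B\to D$ a homomorphism of $D$-bimodules with $d(b)b'=b\,d(b')$ for all $b,b'\in B$. A morphism $(k_1,k_0):(B,D,d)\to(B',D',d')$ consists of a group homomorphism $k_1:B\to B'$ and a ring homomorphism $k_0:D\to D'$ with $k_0d=d'k_1$, $k_1(xb)=k_0(x)k_1(b)$, $k_1(bx)=k_1(b)k_0(x)$. *)

theory Defs
  imports Main
begin

text \<open>
The additive group of the ring B (of an E-system) resp. of the
bimodule B (of a crossed bimodule) is a type 'b of class ab_group_add; the
unital ring D is a type 'd of class ring_1.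
A bimultiplication sigma of B is represented by its two maps; for theta we write
thl x b for the left map applied to b and thr b x for the right map (b theta_x).
Multiplication in M_B: (sigma tau) a = sigma (tau a), a (sigma tau) = (a sigma) tau.
\<close>

record ('b, 'd) esys =
  emul :: "'b \<Rightarrow> 'b \<Rightarrow> 'b"
  ed   :: "'b \<Rightarrow> 'd"
  thl  :: "'d \<Rightarrow> 'b \<Rightarrow> 'b"
  thr  :: "'b \<Rightarrow> 'd \<Rightarrow> 'b"

record ('b, 'd) xbim =
  xd   :: "'b \<Rightarrow> 'd"
  lact :: "'d \<Rightarrow> 'b \<Rightarrow> 'b"
  ract :: "'b \<Rightarrow> 'd \<Rightarrow> 'b"

text \<open>Ring homomorphisms (not required to preserve units).\<close>
definition ring_hom_on ::
  "('a::ab_group_add \<Rightarrow> 'a \<Rightarrow> 'a) \<Rightarrow> ('c::ab_group_add \<Rightarrow> 'c \<Rightarrow> 'c) \<Rightarrow> ('a \<Rightarrow> 'c) \<Rightarrow> bool" where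
  "ring_hom_on m m' f \<longleftrightarrow>
     (\<forall>a b. f (a + b) = f a + f b) \<and> (\<forall>a b. f (m a b) = m' (f a) (f b))"

definition ring_mult :: "('b::ab_group_add \<Rightarrow> 'b \<Rightarrow> 'b) \<Rightarrow> bool" where
  "ring_mult m \<longleftrightarrow>
     (\<forall>a b c. m (m a b) c = m a (m b c)) \<and>
     (\<forall>a b c. m a (b + c) = m a b + m a c) \<and>
     (\<forall>a b c. m (a + b) c = m a c + m b c)"

definition bimult :: "('b::ab_group_add \<Rightarrow> 'b \<Rightarrow> 'b) \<Rightarrow> ('b \<Rightarrow> 'b) \<Rightarrow> ('b \<Rightarrow> 'b) \<Rightarrow> bool" where
  "bimult m l r \<longleftrightarrow>
     (\<forall>a b. l (a + b) = l a + l b) \<and> (\<forall>a b. r (a + b) = r a + r b) \<and>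
     (\<forall>a b. l (m a b) = m (l a) b) \<and> (\<forall>a b. r (m a b) = m a (r b)) \<and>
     (\<forall>a b. m a (l b) = m (r a) b)"

definition esystem :: "('b::ab_group_add, 'd::ring_1) esys \<Rightarrow> bool" where
  "esystem E \<longleftrightarrow>
     ring_mult (emul E) \<and>
     ring_hom_on (emul E) (*) (ed E) \<and>
     \<comment> \<open>theta maps into M_B\<close>
     (\<forall>x. bimult (emul E) (thl E x) (\<lambda>b. thr E b x)) \<and>
     \<comment> \<open>theta is a ring homomorphism D \<rightarrow> M_B\<close>
     (\<forall>x y b. thl E (x + y) b = thl E x b + thl E y b) \<and>
     (\<forall>x y b. thr E b (x + y) = thr E b x + thr E b y) \<and>
     (\<forall>x y b. thl E (x * y) b = thl E x (thl E y b)) \<and>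
     (\<forall>x y b. thr E b (x * y) = thr E (thr E b x) y) \<and>
     \<comment> \<open>theta o d = mu\<close>
     (\<forall>c a. thl E (ed E c) a = emul E c a) \<and>
     (\<forall>c a. thr E a (ed E c) = emul E a c) \<and>
     \<comment> \<open>d(theta_x b) = x d(b), d(b theta_x) = d(b) x\<close>
     (\<forall>x b. ed E (thl E x b) = x * ed E b) \<and>
     (\<forall>x b. ed E (thr E b x) = ed E b * x)"

definition regular_esystem :: "('b::ab_group_add, 'd::ring_1) esys \<Rightarrow> bool" where
  "regular_esystem E \<longleftrightarrow>
     esystem E \<and>
     (\<forall>b. thl E 1 b = b) \<and> (\<forall>b. thr E b 1 = b) \<and>
     \<comment> \<open>any two elements of theta(D) are permutable\<close>
     (\<forall>x y a. thl E x (thr E a y) = thr E (thl E x a) y)"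

definition crossed_bimodule :: "('b::ab_group_add, 'd::ring_1) xbim \<Rightarrow> bool" where
  "crossed_bimodule C \<longleftrightarrow>
     \<comment> \<open>B is a unital D-bimodule\<close>
     (\<forall>x b b'. lact C x (b + b') = lact C x b + lact C x b') \<and>
     (\<forall>x y b. lact C (x + y) b = lact C x b + lact C y b) \<and>
     (\<forall>x y b. lact C (x * y) b = lact C x (lact C y b)) \<and>
     (\<forall>b. lact C 1 b = b) \<and>
     (\<forall>x b b'. ract C (b + b') x = ract C b x + ract C b' x) \<and>
     (\<forall>x y b. ract C b (x + y) = ract C b x + ract C b y) \<and>
     (\<forall>x y b. ract C b (x * y) = ract C (ract C b x) y) \<and>
     (\<forall>b. ract C b 1 = b) \<and>
     (\<forall>x y b. ract C (lact C x b) y = lact C x (ract C b y)) \<and>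
     \<comment> \<open>d is a homomorphism of D-bimodules\<close>
     (\<forall>b b'. xd C (b + b') = xd C b + xd C b') \<and>
     (\<forall>x b. xd C (lact C x b) = x * xd C b) \<and>
     (\<forall>x b. xd C (ract C b x) = xd C b * x) \<and>
     \<comment> \<open>d(b) b' = b d(b')\<close>
     (\<forall>b b'. lact C (xd C b) b' = ract C b (xd C b'))"

definition esys_mor ::
  "('b::ab_group_add, 'd::ring_1) esys \<Rightarrow> ('c::ab_group_add, 'e::ring_1) esys \<Rightarrow>
   ('b \<Rightarrow> 'c) \<Rightarrow> ('d \<Rightarrow> 'e) \<Rightarrow> bool" where
  "esys_mor E E' f1 f0 \<longleftrightarrow>
     ring_hom_on (emul E) (emul E') f1 \<and> ring_hom_on (*) (*) f0 \<and>
     (\<forall>b. f0 (ed E b) = ed E' (f1 b)) \<and>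
     (\<forall>x b. f1 (thl E x b) = thl E' (f0 x) (f1 b)) \<and>
     (\<forall>x b. f1 (thr E b x) = thr E' (f1 b) (f0 x))"

definition xbim_mor ::
  "('b::ab_group_add, 'd::ring_1) xbim \<Rightarrow> ('c::ab_group_add, 'e::ring_1) xbim \<Rightarrow>
   ('b \<Rightarrow> 'c) \<Rightarrow> ('d \<Rightarrow> 'e) \<Rightarrow> bool" where
  "xbim_mor C C' k1 k0 \<longleftrightarrow>
     (\<forall>a b. k1 (a + b) = k1 a + k1 b) \<and> ring_hom_on (*) (*) k0 \<and>
     (\<forall>b. k0 (xd C b) = xd C' (k1 b)) \<and>
     (\<forall>x b. k1 (lact C x b) = lact C' (k0 x) (k1 b)) \<and>
     (\<forall>x b. k1 (ract C b x) = ract C' (k1 b) (k0 x))"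

text \<open>The two assignments on objects (on morphisms both are the identity).\<close>
definition to_xbim :: "('b, 'd) esys \<Rightarrow> ('b, 'd) xbim" where
  "to_xbim E = \<lparr> xd = ed E, lact = thl E, ract = thr E \<rparr>"

definition to_esys :: "('b, 'd::times) xbim \<Rightarrow> ('b, 'd) esys" where
  "to_esys C = \<lparr> emul = (\<lambda>b b'. lact C (xd C b) b'), ed = xd C, thl = lact C, thr = ract C \<rparr>"

end

theory Submission
  imports Defs
begin

text \<open>
Both directions rest on the identity b b' = theta_(d b) b' = b theta_(d b') given
by theta o d = mu: it recovers the multiplication of an E-system from d and the
actions, and it is exactly the crossed condition d(b) b' = b d(b').  Conversely,
b * b' = d(b) b' is associative because d(d(b) b') = d(b) d(b'), and a map
respecting d and the actions automatically respects this multiplication, so the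
two notions of morphism agree as well.
\<close>

lemma regular_esystem_imp_esystem: "regular_esystem E \<Longrightarrow> esystem E"
  unfolding regular_esystem_def by simp

lemma esystem_emul_eq_thl:
  assumes "esystem E"
  shows "emul E b b' = thl E (ed E b) b'"
  using assms unfolding esystem_def by simp

lemma to_esys_to_xbim:
  assumes "esystem E"
  shows "to_esys (to_xbim E) = E"
  unfolding to_esys_def to_xbim_def
  by (intro esys.equality) (auto intro!: ext simp: esystem_emul_eq_thl [OF assms])

lemma to_xbim_to_esys: "to_xbim (to_esys C) = C"
  unfolding to_esys_def to_xbim_def by (intro xbim.equality) simp_all

lemma crossed_bimodule_to_xbim:
  assumes "regular_esystem E"
  shows "crossed_bimodule (to_xbim E)"
  using assms
  unfolding regular_esystem_def esystem_def to_xbim_def crossed_bimodule_def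
    bimult_def ring_hom_on_def
  by auto

lemma ring_mult_to_esys:
  assumes "crossed_bimodule C"
  shows "ring_mult (emul (to_esys C))"
  using assms unfolding crossed_bimodule_def ring_mult_def to_esys_def
  by (auto simp: mult.assoc)

lemma esystem_to_esys:
  assumes C: "crossed_bimodule C"
  shows "esystem (to_esys C)"
proof -
  note axioms = C [unfolded crossed_bimodule_def]
  have "ring_hom_on (emul (to_esys C)) (*) (ed (to_esys C))"
    using axioms unfolding ring_hom_on_def to_esys_def by auto
  moreover have "\<forall>x. bimult (emul (to_esys C)) (thl (to_esys C) x) (\<lambda>b. thr (to_esys C) b x)"
    using axioms unfolding bimult_def to_esys_def by (auto simp: mult.assoc)
  ultimately show ?thesis
    using ring_mult_to_esys [OF C] axioms unfolding esystem_def by (simp add: to_esys_def)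
qed

lemma regular_esystem_to_esys:
  assumes "crossed_bimodule C"
  shows "regular_esystem (to_esys C)"
  using esystem_to_esys [OF assms] assms
  unfolding regular_esystem_def crossed_bimodule_def by (simp add: to_esys_def)

lemma esys_mor_iff_xbim_mor:
  assumes E: "esystem E" and E': "esystem E'"
  shows "esys_mor E E' f1 f0 \<longleftrightarrow> xbim_mor (to_xbim E) (to_xbim E') f1 f0"
proof
  assume "esys_mor E E' f1 f0"
  then show "xbim_mor (to_xbim E) (to_xbim E') f1 f0"
    unfolding esys_mor_def xbim_mor_def ring_hom_on_def to_xbim_def by auto
next
  assume m: "xbim_mor (to_xbim E) (to_xbim E') f1 f0"
  have "f1 (emul E a b) = emul E' (f1 a) (f1 b)" for a b
  proof -
    have "f1 (emul E a b) = f1 (thl E (ed E a) b)"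
      by (simp add: esystem_emul_eq_thl [OF E])
    also have "\<dots> = thl E' (ed E' (f1 a)) (f1 b)"
      using m unfolding xbim_mor_def to_xbim_def by simp
    also have "\<dots> = emul E' (f1 a) (f1 b)"
      by (simp add: esystem_emul_eq_thl [OF E'])
    finally show ?thesis .
  qed
  then show "esys_mor E E' f1 f0"
    using m unfolding esys_mor_def xbim_mor_def ring_hom_on_def to_xbim_def by auto
qed

lemma xbim_mor_iff_esys_mor:
  "xbim_mor C C' k1 k0 \<longleftrightarrow> esys_mor (to_esys C) (to_esys C') k1 k0"
  unfolding esys_mor_def xbim_mor_def ring_hom_on_def to_esys_def by auto

theorem mainTheorem2:
  shows
   "(\<forall>E :: ('b::ab_group_add, 'd::ring_1) esys.
        regular_esystem E \<longrightarrow> crossed_bimodule (to_xbim E) \<and> to_esys (to_xbim E) = E)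
  \<and> (\<forall>C :: ('b, 'd) xbim.
        crossed_bimodule C \<longrightarrow> regular_esystem (to_esys C) \<and> to_xbim (to_esys C) = C)
  \<and> (\<forall>(E :: ('b, 'd) esys) (E' :: ('c::ab_group_add, 'e::ring_1) esys) f1 f0.
        regular_esystem E \<longrightarrow> regular_esystem E' \<longrightarrow>
        (esys_mor E E' f1 f0 \<longleftrightarrow> xbim_mor (to_xbim E) (to_xbim E') f1 f0))
  \<and> (\<forall>(C :: ('b, 'd) xbim) (C' :: ('c, 'e) xbim) k1 k0.
        crossed_bimodule C \<longrightarrow> crossed_bimodule C' \<longrightarrow>
        (xbim_mor C C' k1 k0 \<longleftrightarrow> esys_mor (to_esys C) (to_esys C') k1 k0))"
proof (intro conjI allI impI)
  show "crossed_bimodule (to_xbim E)" "to_esys (to_xbim E) = E" if "regular_esystem E"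
    for E :: "('b, 'd) esys"
    using that by (simp_all add: crossed_bimodule_to_xbim to_esys_to_xbim regular_esystem_imp_esystem)
  show "regular_esystem (to_esys C)" "to_xbim (to_esys C) = C" if "crossed_bimodule C"
    for C :: "('b, 'd) xbim"
    using that by (simp_all add: regular_esystem_to_esys to_xbim_to_esys)
  show "esys_mor E E' f1 f0 \<longleftrightarrow> xbim_mor (to_xbim E) (to_xbim E') f1 f0"
    if "regular_esystem E" "regular_esystem E'"
    for E :: "('b, 'd) esys" and E' :: "('c, 'e) esys" and f1 f0
    using that by (simp add: esys_mor_iff_xbim_mor regular_esystem_imp_esystem)
qed (rule xbim_mor_iff_esys_mor)

end
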